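(* A hermitian operator $R$ on $\mathcal H_{2N-1}\otimes\cdots\otimes\mathcal H_0$ satisfies the normalization conditions of a deterministic quantum $N$-comb (i.e. there exist $R^{(n)}$ as in the definition) if and only if $$R=\frac{1}{d_{2N-1}d_{2N-3}\cdots d_1}\,I_{2N-1,\dots,0}+X$$ for some $X$ in the real linear span of $\mathbb D_{(N)}$. Consequently $R$ is a deterministic quantum $N$-comb iff it is positive and of this form.
   Context: All Hilbert spaces are finite-dimensional, $d_k=\dim\mathcal H_k$, $I_k$ is the identity on $\mathcal H_k$ and $I_{2N-1,\dots,0}$ the identity on the whole space. A deterministic quantum $N$-comb is a positive operator $R$ for which there are operators $R^{(n)}$ on $\mathcal H_0\otimes\cdots\otimes\mathcal H_{2n-1}$, $n=1,\dots,N$, with $R^{(N)}=R$, $\operatorname{Tr}_{2n-1}R^{(n)}=I_{2n-2}\otimes R^{(n-1)}$ for $2\le n\le N$, and $\operatorname{Tr}_1R^{(1)}=I_0$. For each $k$ let $\{E^{(k)}_a\}_{a=2}^{d_k^2}$ be a basis of traceless hermitian operators on $\mathcal H_k$, and for even $k$ let $\{F^{(k)}_j\}$ be a basis of hermitian operators on $\mathcal H_k\otimes\cdots\otimes\mathcal H_0$. $\mathbb D_{(N)}$ is the set of operators $I_{2N-1}\otimes\cdots\otimes I_{2n}\otimes E^{(2n-1)}_a\otimes F^{(2n-2)}_j$, $n=1,\dots,N$. *)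

theory Defs
  imports Complex_Main
begin

text \<open>The Hilbert space H_k has dimension d k and orthonormal basis
indexed by 0..<d k. A basis vector of H_{m-1} (x) ... (x) H_0 is a multi-index
i :: nat => nat with i k < d k for k < m and i k = 0 for k >= m.
An operator on that space is represented by its matrix entries
A :: (nat => nat) => (nat => nat) => complex, required to vanish outside the
index set (predicate is_op). Operators on a single factor H_k are matrices
E :: nat => nat => complex vanishing outside {0..<d k}.\<close>

type_synonym op = "(nat \<Rightarrow> nat) \<Rightarrow> (nat \<Rightarrow> nat) \<Rightarrow> complex"
type_synonym sop = "nat \<Rightarrow> nat \<Rightarrow> complex"

definition idx :: "(nat \<Rightarrow> nat) \<Rightarrow> nat \<Rightarrow> (nat \<Rightarrow> nat) set" where
  "idx d m = {i. (\<forall>k<m. i k < d k) \<and> (\<forall>k\<ge>m. i k = 0)}"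

definition is_op :: "(nat \<Rightarrow> nat) \<Rightarrow> nat \<Rightarrow> op \<Rightarrow> bool" where
  "is_op d m A \<longleftrightarrow> (\<forall>i j. i \<notin> idx d m \<or> j \<notin> idx d m \<longrightarrow> A i j = 0)"

definition is_sop :: "(nat \<Rightarrow> nat) \<Rightarrow> nat \<Rightarrow> sop \<Rightarrow> bool" where
  "is_sop d k E \<longleftrightarrow> (\<forall>a b. d k \<le> a \<or> d k \<le> b \<longrightarrow> E a b = 0)"

definition hermitian_fn :: "('a \<Rightarrow> 'a \<Rightarrow> complex) \<Rightarrow> bool" where
  "hermitian_fn A \<longleftrightarrow> (\<forall>i j. A j i = cnj (A i j))"

definition Id_op :: "(nat \<Rightarrow> nat) \<Rightarrow> nat \<Rightarrow> op" where
  "Id_op d m = (\<lambda>i j. if i \<in> idx d m \<and> i = j then 1 else 0)"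

definition ptrace :: "(nat \<Rightarrow> nat) \<Rightarrow> nat \<Rightarrow> op \<Rightarrow> op" where
  "ptrace d k A = (\<lambda>i j. if i \<in> idx d k \<and> j \<in> idx d k
      then (\<Sum>a<d k. A (i(k := a)) (j(k := a))) else 0)"

text \<open>I_k (x) B for B an operator on H_{k-1} (x) ... (x) H_0.\<close>
definition tensorI :: "(nat \<Rightarrow> nat) \<Rightarrow> nat \<Rightarrow> op \<Rightarrow> op" where
  "tensorI d k B = (\<lambda>i j. if i \<in> idx d (Suc k) \<and> j \<in> idx d (Suc k) \<and> i k = j k
      then B (i(k := 0)) (j(k := 0)) else 0)"

definition comb_norm :: "(nat \<Rightarrow> nat) \<Rightarrow> nat \<Rightarrow> op \<Rightarrow> bool" where
  "comb_norm d N R \<longleftrightarrow> (\<exists>Rs :: nat \<Rightarrow> op.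
      Rs N = R \<and>
      (\<forall>n. 1 \<le> n \<and> n \<le> N \<longrightarrow> is_op d (2*n) (Rs n)) \<and>
      (\<forall>n. 2 \<le> n \<and> n \<le> N \<longrightarrow> ptrace d (2*n-1) (Rs n) = tensorI d (2*n-2) (Rs (n-1))) \<and>
      ptrace d 1 (Rs 1) = Id_op d 1)"

definition positive_op :: "(nat \<Rightarrow> nat) \<Rightarrow> nat \<Rightarrow> op \<Rightarrow> bool" where
  "positive_op d m A \<longleftrightarrow> is_op d m A \<and>
     (\<forall>v :: (nat \<Rightarrow> nat) \<Rightarrow> complex.
        let q = (\<Sum>i\<in>idx d m. \<Sum>j\<in>idx d m. cnj (v i) * A i j * v j) in Im q = 0 \<and> 0 \<le> Re q)"

definition det_comb :: "(nat \<Rightarrow> nat) \<Rightarrow> nat \<Rightarrow> op \<Rightarrow> bool" where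
  "det_comb d N R \<longleftrightarrow> positive_op d (2*N) R \<and> comb_norm d N R"

definition rspan :: "('a \<Rightarrow> 'b \<Rightarrow> complex) set \<Rightarrow> ('a \<Rightarrow> 'b \<Rightarrow> complex) set" where
  "rspan S = {X. \<exists>T c. finite T \<and> T \<subseteq> S \<and>
      X = (\<lambda>i j. \<Sum>t\<in>T. complex_of_real (c t) * t i j)}"

definition rindep :: "('a \<Rightarrow> 'b \<Rightarrow> complex) set \<Rightarrow> bool" where
  "rindep S \<longleftrightarrow> (\<forall>T c. finite T \<and> T \<subseteq> S \<and>
      (\<lambda>i j. \<Sum>t\<in>T. complex_of_real (c t) * t i j) = (\<lambda>i j. 0) \<longrightarrow> (\<forall>t\<in>T. c t = 0))"

definition rbasis :: "('a \<Rightarrow> 'b \<Rightarrow> complex) set \<Rightarrow> ('a \<Rightarrow> 'b \<Rightarrow> complex) set \<Rightarrow> bool" where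
  "rbasis B V \<longleftrightarrow> B \<subseteq> V \<and> rindep B \<and> rspan B = V"

definition traceless_herm :: "(nat \<Rightarrow> nat) \<Rightarrow> nat \<Rightarrow> sop set" where
  "traceless_herm d k = {E. is_sop d k E \<and> hermitian_fn E \<and> (\<Sum>a<d k. E a a) = 0}"

definition herm_ops :: "(nat \<Rightarrow> nat) \<Rightarrow> nat \<Rightarrow> op set" where
  "herm_ops d m = {F. is_op d m F \<and> hermitian_fn F}"

text \<open>I_{2N-1} (x) ... (x) I_{2n} (x) E (x) F, with E on H_{2n-1} and
F on H_{2n-2} (x) ... (x) H_0, as an operator on H_{2N-1} (x) ... (x) H_0.\<close>
definition gen_op :: "(nat \<Rightarrow> nat) \<Rightarrow> nat \<Rightarrow> nat \<Rightarrow> sop \<Rightarrow> op \<Rightarrow> op" where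
  "gen_op d N n E F = (\<lambda>i j.
     if i \<in> idx d (2*N) \<and> j \<in> idx d (2*N) \<and> (\<forall>k. 2*n \<le> k \<and> k < 2*N \<longrightarrow> i k = j k)
     then E (i (2*n-1)) (j (2*n-1)) *
          F (\<lambda>k. if k < 2*n-1 then i k else 0) (\<lambda>k. if k < 2*n-1 then j k else 0)
     else 0)"

text \<open>The set D_(N), given bases Eb k of traceless hermitian operators on H_k and
Fb k (k even) of hermitian operators on H_k (x) ... (x) H_0.\<close>
definition DN :: "(nat \<Rightarrow> nat) \<Rightarrow> nat \<Rightarrow> (nat \<Rightarrow> sop set) \<Rightarrow> (nat \<Rightarrow> op set) \<Rightarrow> op set" where
  "DN d N Eb Fb = {gen_op d N n E F | n E F.
      1 \<le> n \<and> n \<le> N \<and> E \<in> Eb (2*n-1) \<and> F \<in> Fb (2*n-2)}"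

end

theory Submission
  imports Defs
begin

text \<open>
  Write k = 2M+1 for the output space of the last tooth of an (M+1)-comb and
  K = 2M. Every hermitian operator R on H_k (x) H_K (x) ... (x) H_0 splits as
    R = Y + (1 / d_k) I_k (x) Tr_k R,   with Tr_k Y = 0,
  and a hermitian operator with vanishing partial trace over H_k lies in the real span of
  the operators E (x) F, E traceless hermitian on H_k and F hermitian on H_K (x) ... (x) H_0,
  i.e. of the top layer of D_(M+1). Conversely the top layer is annihilated by Tr_k, and the
  remaining generators of D_(M+1) are exactly I_k (x) I_K (x) G for G in D_(M).
  Hence "R = c I + X with X in span D_(M+1)" holds iff "Tr_k R = I_K (x) Q with
  Q = c d_k I + X' and X' in span D_(M)". The normalization conditions of a comb have the
  same recursive shape (Tr_k R = I_K (x) Q with Q normalized for M teeth), so both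
  characterizations agree by induction on the number of teeth, starting from the trivial
  space, where the only normalized operator is the identity.
\<close>

section \<open>Real linear spans of matrices\<close>

lemma rspan_zero: "(\<lambda>i j. 0) \<in> rspan S"
  unfolding rspan_def by (rule CollectI, rule exI[of _ "{}"], auto)

lemma rspan_gen: "x \<in> S \<Longrightarrow> x \<in> rspan S"
  unfolding rspan_def by (rule CollectI, rule exI[of _ "{x}"], rule exI[of _ "\<lambda>_. 1"], auto)

lemma rspan_empty: "X \<in> rspan {} \<Longrightarrow> X = (\<lambda>i j. 0)"
  unfolding rspan_def by auto

lemma rspan_add:
  assumes "x \<in> rspan S" "y \<in> rspan S"
  shows "(\<lambda>i j. x i j + y i j) \<in> rspan S"
proof -
  obtain T1 c1 where 1: "finite T1" "T1 \<subseteq> S" "x = (\<lambda>i j. \<Sum>t\<in>T1. complex_of_real (c1 t) * t i j)"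
    using assms(1) unfolding rspan_def by auto
  obtain T2 c2 where 2: "finite T2" "T2 \<subseteq> S" "y = (\<lambda>i j. \<Sum>t\<in>T2. complex_of_real (c2 t) * t i j)"
    using assms(2) unfolding rspan_def by auto
  \<comment> \<open>extend both coefficient families by zero to the common support T1 \<union> T2\<close>
  define c where "c t = (if t \<in> T1 then c1 t else 0) + (if t \<in> T2 then c2 t else 0)" for t
  have e1: "(\<Sum>t\<in>T1\<union>T2. complex_of_real (if t \<in> T1 then c1 t else 0) * t i j)
      = (\<Sum>t\<in>T1. complex_of_real (c1 t) * t i j)" for i j
    by (rule sum.mono_neutral_cong_right) (use 1 2 in auto)
  have e2: "(\<Sum>t\<in>T1\<union>T2. complex_of_real (if t \<in> T2 then c2 t else 0) * t i j)
      = (\<Sum>t\<in>T2. complex_of_real (c2 t) * t i j)" for i j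
    by (rule sum.mono_neutral_cong_right) (use 1 2 in auto)
  have "(\<lambda>i j. x i j + y i j) = (\<lambda>i j. \<Sum>t\<in>T1\<union>T2. complex_of_real (c t) * t i j)"
    unfolding 1 2 c_def
    by (intro ext) (simp only: of_real_add distrib_right sum.distrib e1 e2)
  moreover have "finite (T1 \<union> T2)" "T1 \<union> T2 \<subseteq> S" using 1 2 by auto
  ultimately show ?thesis unfolding rspan_def by (intro CollectI exI conjI)
qed

lemma rspan_scale:
  assumes "x \<in> rspan S"
  shows "(\<lambda>i j. complex_of_real r * x i j) \<in> rspan S"
proof -
  obtain T c where 1: "finite T" "T \<subseteq> S" "x = (\<lambda>i j. \<Sum>t\<in>T. complex_of_real (c t) * t i j)"
    using assms unfolding rspan_def by auto
  have "(\<lambda>i j. complex_of_real r * x i j) = (\<lambda>i j. \<Sum>t\<in>T. complex_of_real (r * c t) * t i j)"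
    unfolding 1 by (intro ext) (simp add: sum_distrib_left mult.assoc)
  with 1(1,2) show ?thesis unfolding rspan_def by (intro CollectI exI conjI)
qed

lemma rspan_sum:
  assumes "finite B" "\<forall>b\<in>B. f b \<in> rspan S"
  shows "(\<lambda>i j. \<Sum>b\<in>B. f b i j) \<in> rspan S"
  using assms
proof (induction B rule: finite_induct)
  case empty then show ?case using rspan_zero by simp
next
  case (insert x F)
  then have "(\<lambda>i j. f x i j + (\<Sum>b\<in>F. f b i j)) \<in> rspan S"
    using rspan_add[of "f x" S "\<lambda>i j. \<Sum>b\<in>F. f b i j"] by auto
  then show ?case using insert by simp
qed

lemma rspan_induct:
  assumes "X \<in> rspan S" "P (\<lambda>i j. 0)"
    "\<And>x y r. x \<in> S \<Longrightarrow> P y \<Longrightarrow> P (\<lambda>i j. complex_of_real r * x i j + y i j)"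
  shows "P X"
proof -
  obtain T c where 1: "finite T" "T \<subseteq> S" "X = (\<lambda>i j. \<Sum>t\<in>T. complex_of_real (c t) * t i j)"
    using assms unfolding rspan_def by auto
  have "P (\<lambda>i j. \<Sum>t\<in>T. complex_of_real (c t) * t i j)" using 1(1,2)
  proof (induction T rule: finite_induct)
    case empty then show ?case using assms(2) by simp
  next
    case (insert x F)
    then show ?case using assms(3)[of x "\<lambda>i j. \<Sum>t\<in>F. complex_of_real (c t) * t i j" "c x"] by auto
  qed
  then show ?thesis using 1 by simp
qed

lemma rspan_subset_rspan: "S \<subseteq> rspan S' \<Longrightarrow> X \<in> rspan S \<Longrightarrow> X \<in> rspan S'"
proof (erule rspan_induct)
  show "(\<lambda>i j. 0) \<in> rspan S'" by (rule rspan_zero)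
  fix x y r assume "S \<subseteq> rspan S'" "x \<in> S" "y \<in> rspan S'"
  then show "(\<lambda>i j. complex_of_real r * x i j + y i j) \<in> rspan S'"
    using rspan_add[OF rspan_scale[of x S' r]] by blast
qed


section \<open>Multi-indices, partial traces and tensoring with the identity\<close>

lemma idx_upd: "i \<in> idx d k \<Longrightarrow> a < d k \<Longrightarrow> i(k:=a) \<in> idx d (Suc k)"
  unfolding idx_def by (auto simp: less_Suc_eq)

lemma idx_upd0: "i \<in> idx d (Suc k) \<Longrightarrow> i(k:=0) \<in> idx d k"
  unfolding idx_def by (auto simp: less_Suc_eq Suc_le_eq)

lemma idx_at: "i \<in> idx d k \<Longrightarrow> i k = 0"
  unfolding idx_def by auto

lemma idx_Suc: "i \<in> idx d k \<Longrightarrow> 0 < d k \<Longrightarrow> i \<in> idx d (Suc k)"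
  unfolding idx_def by (auto simp: less_Suc_eq)

lemma restrict_top: "i \<in> idx d (Suc k) \<Longrightarrow> (\<lambda>l. if l < k then i l else 0) = i(k := 0)"
  unfolding idx_def by (auto intro!: ext simp: not_less le_Suc_eq)

lemma is_op_zero: "is_op d k (\<lambda>i j. 0)"
  unfolding is_op_def by auto

lemma is_op_lin: "is_op d k A \<Longrightarrow> is_op d k B \<Longrightarrow> is_op d k (\<lambda>i j. r * A i j + B i j)"
  unfolding is_op_def by auto

lemma is_op_Id: "is_op d k (Id_op d k)"
  unfolding is_op_def Id_op_def by auto

lemma is_op_ptrace: "is_op d k (ptrace d k B)"
  unfolding is_op_def ptrace_def by auto

lemma is_op_tensorI: "is_op d (Suc k) (tensorI d k B)"
  unfolding is_op_def tensorI_def by auto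

lemma ptrace_lin:
  "ptrace d k (\<lambda>i j. r * A i j + B i j) = (\<lambda>i j. r * ptrace d k A i j + ptrace d k B i j)"
  unfolding ptrace_def by (intro ext) (simp add: sum.distrib sum_distrib_left)

lemma ptrace_add: "ptrace d k (\<lambda>i j. A i j + B i j) = (\<lambda>i j. ptrace d k A i j + ptrace d k B i j)"
  unfolding ptrace_def by (intro ext) (simp add: sum.distrib)

lemma ptrace_zero: "ptrace d k (\<lambda>i j. 0) = (\<lambda>i j. 0)"
  unfolding ptrace_def by (intro ext) simp

lemma tensorI_lin:
  "tensorI d k (\<lambda>i j. r * A i j + B i j) = (\<lambda>i j. r * tensorI d k A i j + tensorI d k B i j)"
  unfolding tensorI_def by (intro ext) simp

lemma tensorI_scale: "tensorI d k (\<lambda>i j. r * A i j) = (\<lambda>i j. r * tensorI d k A i j)"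
  unfolding tensorI_def by (intro ext) simp

lemma tensorI_zero: "tensorI d k (\<lambda>i j. 0) = (\<lambda>i j. 0)"
  unfolding tensorI_def by (intro ext) simp

lemma ptrace_tensorI:
  assumes "is_op d k A"
  shows "ptrace d k (tensorI d k A) = (\<lambda>i j. of_nat (d k) * A i j)"
proof (intro ext)
  fix i j
  show "ptrace d k (tensorI d k A) i j = of_nat (d k) * A i j"
  proof (cases "i \<in> idx d k \<and> j \<in> idx d k")
    case True
    have ii: "i(k:=0) = i" "j(k:=0) = j" using True idx_at[of i d k] idx_at[of j d k] by auto
    from True have "tensorI d k A (i(k := a)) (j(k := a)) = A i j" if "a < d k" for a
      using that idx_upd[of i d k a] idx_upd[of j d k a] ii
      unfolding tensorI_def by auto
    then show ?thesis using True unfolding ptrace_def by simp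
  next
    case False
    then show ?thesis using assms unfolding ptrace_def is_op_def by auto
  qed
qed

lemma tensorI_Id: "tensorI d k (Id_op d k) = Id_op d (Suc k)"
proof (intro ext)
  fix i j
  show "tensorI d k (Id_op d k) i j = Id_op d (Suc k) i j"
  proof (cases "i \<in> idx d (Suc k) \<and> j \<in> idx d (Suc k) \<and> i k = j k")
    case True
    have "(i(k:=0) = j(k:=0)) = (i = j)"
    proof
      assume "i(k:=0) = j(k:=0)"
      then have "\<forall>l. l \<noteq> k \<longrightarrow> i l = j l" by (metis fun_upd_other)
      then show "i = j" using True by auto
    qed simp
    then show ?thesis using True idx_upd0[of i d k] unfolding tensorI_def Id_op_def by auto
  next
    case False
    then show ?thesis unfolding tensorI_def Id_op_def by auto
  qed
qed

lemma herm_lin: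
  assumes "hermitian_fn A" "hermitian_fn B"
  shows "hermitian_fn (\<lambda>i j. complex_of_real r * A i j + B i j)"
  unfolding hermitian_fn_def
proof (intro allI)
  fix i j
  have "A j i = cnj (A i j)" "B j i = cnj (B i j)" using assms unfolding hermitian_fn_def by blast+
  then show "complex_of_real r * A j i + B j i = cnj (complex_of_real r * A i j + B i j)" by simp
qed

lemma herm_ptrace: assumes "hermitian_fn A" shows "hermitian_fn (ptrace d k A)"
proof -
  have h: "A j i = cnj (A i j)" for i j using assms unfolding hermitian_fn_def by blast
  show ?thesis unfolding hermitian_fn_def ptrace_def
  proof (intro allI)
    fix i j
    have "(\<Sum>a<d k. A (j(k := a)) (i(k := a))) = cnj (\<Sum>a<d k. A (i(k := a)) (j(k := a)))"
      unfolding cnj_sum by (rule sum.cong) (rule refl, rule h)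
    then show "(if j \<in> idx d k \<and> i \<in> idx d k then \<Sum>a<d k. A (j(k := a)) (i(k := a)) else 0) =
       cnj (if i \<in> idx d k \<and> j \<in> idx d k then \<Sum>a<d k. A (i(k := a)) (j(k := a)) else 0)"
      by auto
  qed
qed

lemma herm_tensorI: assumes "hermitian_fn A" shows "hermitian_fn (tensorI d k A)"
proof -
  have h: "A j i = cnj (A i j)" for i j using assms unfolding hermitian_fn_def by blast
  show ?thesis unfolding hermitian_fn_def tensorI_def
  proof (intro allI)
    fix i j
    show "(if j \<in> idx d (Suc k) \<and> i \<in> idx d (Suc k) \<and> j k = i k then A (j(k := 0)) (i(k := 0)) else 0) =
       cnj (if i \<in> idx d (Suc k) \<and> j \<in> idx d (Suc k) \<and> i k = j k then A (i(k := 0)) (j(k := 0)) else 0)"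
      using h[of "i(k:=0)" "j(k:=0)"] by auto
  qed
qed

lemma herm_from_tensorI:
  assumes "is_op d k Q" "0 < d k" "hermitian_fn (tensorI d k Q)"
  shows "hermitian_fn Q"
  unfolding hermitian_fn_def
proof (intro allI)
  fix i j
  show "Q j i = cnj (Q i j)"
  proof (cases "i \<in> idx d k \<and> j \<in> idx d k")
    case True
    then have "tensorI d k Q i j = Q i j" "tensorI d k Q j i = Q j i"
      using idx_Suc[of _ d k, OF _ assms(2)] idx_at[of i d k] idx_at[of j d k]
      unfolding tensorI_def by (auto simp: fun_upd_idem)
    then show ?thesis using assms(3) unfolding hermitian_fn_def by metis
  next
    case False then show ?thesis using assms(1) unfolding is_op_def by auto
  qed
qed

section \<open>The generators of D_(N)\<close>

lemma is_op_gen: "is_op d (2*N) (gen_op d N n E F)"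
  unfolding is_op_def gen_op_def by auto

text \<open>Linearity of a guarded product in its left resp. right factor; gen_op is such a product.\<close>
lemma if_prod_linear_left: "(if c then (r*a+b)*(f::complex) else 0) = r*(if c then a*f else 0) + (if c then b*f else 0)"
  by (cases c) (simp_all add: ring_distribs mult.assoc)

lemma if_prod_linear_right: "(if c then e*(r*a+b::complex) else 0) = r*(if c then e*a else 0) + (if c then e*b else 0)"
  by (cases c) (simp_all add: ring_distribs mult.assoc mult.left_commute)

lemma gen_op_linE:
  "gen_op d N n (\<lambda>x y. r * E1 x y + E2 x y) F = (\<lambda>i j. r * gen_op d N n E1 F i j + gen_op d N n E2 F i j)"
  unfolding gen_op_def by (intro ext) (rule if_prod_linear_left)

lemma gen_op_linF:
  "gen_op d N n E (\<lambda>x y. r * F1 x y + F2 x y) = (\<lambda>i j. r * gen_op d N n E F1 i j + gen_op d N n E F2 i j)"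
  unfolding gen_op_def by (intro ext) (rule if_prod_linear_right)

lemma gen_op_zeroE: "gen_op d N n (\<lambda>x y. 0) F = (\<lambda>i j. 0)"
  unfolding gen_op_def by (intro ext) simp

lemma gen_op_zeroF: "gen_op d N n E (\<lambda>x y. 0) = (\<lambda>i j. 0)"
  unfolding gen_op_def by (intro ext) simp

text \<open>gen_op is real-bilinear, so it maps spans to the span of generators.\<close>
lemma gen_op_span:
  assumes "E \<in> rspan SE" "F \<in> rspan SF"
  shows "gen_op d N n E F \<in> rspan {gen_op d N n E' F' | E' F'. E' \<in> SE \<and> F' \<in> SF}"
  (is "_ \<in> rspan ?S")
proof -
  have F: "gen_op d N n E' F \<in> rspan ?S" if "E' \<in> SE" for E'
    using assms(2)
  proof (rule rspan_induct)
    show "gen_op d N n E' (\<lambda>i j. 0) \<in> rspan ?S" by (simp add: gen_op_zeroF rspan_zero)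
    fix x y r assume "x \<in> SF" "gen_op d N n E' y \<in> rspan ?S"
    moreover have "gen_op d N n E' x \<in> rspan ?S" using \<open>x \<in> SF\<close> that by (intro rspan_gen) blast
    ultimately show "gen_op d N n E' (\<lambda>i j. complex_of_real r * x i j + y i j) \<in> rspan ?S"
      unfolding gen_op_linF by (intro rspan_add rspan_scale)
  qed
  show ?thesis
    using assms(1)
  proof (rule rspan_induct)
    show "gen_op d N n (\<lambda>i j. 0) F \<in> rspan ?S" by (simp add: gen_op_zeroE rspan_zero)
    fix x y r assume "x \<in> SE" "gen_op d N n y F \<in> rspan ?S"
    then show "gen_op d N n (\<lambda>i j. complex_of_real r * x i j + y i j) F \<in> rspan ?S"
      unfolding gen_op_linE using F by (intro rspan_add rspan_scale) auto
  qed
qed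

lemma gen_op_top:
  assumes "i \<in> idx d (Suc (Suc (2*M)))" "j \<in> idx d (Suc (Suc (2*M)))"
  shows "gen_op d (Suc M) (Suc M) E F i j
       = E (i (Suc (2*M))) (j (Suc (2*M))) * F (i(Suc (2*M) := 0)) (j(Suc (2*M) := 0))"
  unfolding gen_op_def using assms restrict_top[OF assms(1)] restrict_top[OF assms(2)] by simp

lemma ptrace_gen_top:
  assumes "is_sop d (Suc (2*M)) E" "(\<Sum>a<d (Suc (2*M)). E a a) = 0"
  shows "ptrace d (Suc (2*M)) (gen_op d (Suc M) (Suc M) E F) = (\<lambda>i j. 0)"
proof (intro ext)
  fix i j
  define k where "k = Suc (2*M)"
  have k: "2 * Suc M = Suc k" "2 * Suc M - 1 = k" unfolding k_def by auto
  show "ptrace d (Suc (2*M)) (gen_op d (Suc M) (Suc M) E F) i j = 0"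
  proof (cases "i \<in> idx d k \<and> j \<in> idx d k")
    case True
    have r: "(\<lambda>l. if l < k then (i(k := a)) l else 0) = i" "(\<lambda>l. if l < k then (j(k := a)) l else 0) = j" for a
      using True unfolding idx_def by (auto intro!: ext)
    have "gen_op d (Suc M) (Suc M) E F (i(k := a)) (j(k := a)) = E a a * F i j" if "a < d k" for a
      unfolding gen_op_def k using idx_upd[of i d k a] idx_upd[of j d k a] True that by (simp add: r)
    then have "ptrace d k (gen_op d (Suc M) (Suc M) E F) i j = (\<Sum>a<d k. E a a) * F i j"
      unfolding ptrace_def using True by (simp add: sum_distrib_right)
    then show ?thesis using assms k_def by simp
  next
    case False then show ?thesis unfolding ptrace_def k_def by auto
  qed
qed

lemma gen_op_lift:
  assumes "1 \<le> n" "n \<le> M"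
  shows "tensorI d (Suc (2*M)) (tensorI d (2*M) (gen_op d M n E F)) = gen_op d (Suc M) n E F"
proof (intro ext)
  fix i j
  define K where "K = 2*M"
  have K: "2*n \<le> K" "2 * Suc M = Suc (Suc K)" "2*n - 1 < K" using assms unfolding K_def by auto
  show "tensorI d (Suc (2*M)) (tensorI d (2*M) (gen_op d M n E F)) i j = gen_op d (Suc M) n E F i j"
  proof (cases "i \<in> idx d (Suc (Suc K)) \<and> j \<in> idx d (Suc (Suc K))")
    case False
    then show ?thesis unfolding tensorI_def gen_op_def K_def[symmetric] K(2) by auto
  next
    case True
    have i1: "i(Suc K := 0) \<in> idx d (Suc K)" "j(Suc K := 0) \<in> idx d (Suc K)"
      using True idx_upd0 by blast+
    have i2: "i(Suc K := 0, K := 0) \<in> idx d K" "j(Suc K := 0, K := 0) \<in> idx d K"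
      using i1 idx_upd0 by blast+
    have r: "(\<lambda>l. if l < 2*n-1 then (i(Suc K := 0, K := 0)) l else 0) = (\<lambda>l. if l < 2*n-1 then i l else 0)"
            "(\<lambda>l. if l < 2*n-1 then (j(Suc K := 0, K := 0)) l else 0) = (\<lambda>l. if l < 2*n-1 then j l else 0)"
      using K by (auto intro!: ext)
    have e: "(i(Suc K := 0, K := 0)) (2*n-1) = i (2*n-1)" "(j(Suc K := 0, K := 0)) (2*n-1) = j (2*n-1)"
      using K by auto
    have cond: "((\<forall>l. 2*n \<le> l \<and> l < K \<longrightarrow> (i(Suc K := 0, K := 0)) l = (j(Suc K := 0, K := 0)) l)
       \<and> i K = j K \<and> i (Suc K) = j (Suc K)) \<longleftrightarrow> (\<forall>l. 2*n \<le> l \<and> l < Suc (Suc K) \<longrightarrow> i l = j l)"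
      using K by (auto simp: less_Suc_eq)
    show ?thesis
      unfolding tensorI_def gen_op_def K_def[symmetric] K(2)
      using True i1 i2 cond r e by auto
  qed
qed


section \<open>Operators with vanishing partial trace over the top factor\<close>

text \<open>Matrix units on a single factor, and the real basis of traceless hermitian matrices
  built from them: symmetric combinations (corrected on the diagonal by a multiple of the
  identity of C^D to make them traceless) and antisymmetric imaginary combinations.\<close>
definition unit_sop :: "nat \<Rightarrow> nat \<Rightarrow> sop" where
  "unit_sop a b = (\<lambda>x y. if x = a \<and> y = b then 1 else 0)"

definition sym_sop :: "nat \<Rightarrow> nat \<Rightarrow> nat \<Rightarrow> sop" where
  "sym_sop D a b = (\<lambda>x y. unit_sop a b x y + unit_sop b a x y
     - (if a = b then complex_of_real (2 / real D) else 0) * (if x = y \<and> x < D then 1 else 0))"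

definition asym_sop :: "nat \<Rightarrow> nat \<Rightarrow> sop" where
  "asym_sop a b = (\<lambda>x y. \<i> * unit_sop a b x y - \<i> * unit_sop b a x y)"

lemma sym_sop_traceless:
  assumes "a < d k" "b < d k"
  shows "sym_sop (d k) a b \<in> traceless_herm d k"
proof -
  define D where "D = d k"
  have D0: "0 < D" using assms D_def by simp
  have "is_sop d k (sym_sop D a b)" using assms unfolding is_sop_def sym_sop_def unit_sop_def D_def by auto
  moreover have "hermitian_fn (sym_sop D a b)" unfolding hermitian_fn_def sym_sop_def unit_sop_def by auto
  moreover have "(\<Sum>x<D. sym_sop D a b x x) = 0"
  proof -
    have "(\<Sum>x<D. sym_sop D a b x x) = (\<Sum>x<D. unit_sop a b x x) + (\<Sum>x<D. unit_sop b a x x)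
        - (if a = b then complex_of_real (2 / real D) else 0) * (\<Sum>x<D. if x < D then 1 else 0)"
      unfolding sym_sop_def by (simp add: sum.distrib sum_subtractf sum_distrib_left)
    also have "(\<Sum>x<D. if x < D then 1 else 0) = (of_nat D :: complex)" by simp
    also have "(\<Sum>x<D. unit_sop a b x x) = (if a = b then 1 else 0)"
      unfolding unit_sop_def using assms D_def by (cases "a = b") (auto intro: sum.neutral)
    also have "(\<Sum>x<D. unit_sop b a x x) = (if a = b then 1 else 0)"
      unfolding unit_sop_def using assms D_def by (cases "a = b") (auto intro: sum.neutral)
    finally show ?thesis using D0 by simp
  qed
  ultimately show ?thesis unfolding traceless_herm_def D_def by simp
qed

lemma asym_sop_traceless:
  assumes "a < d k" "b < d k"
  shows "asym_sop a b \<in> traceless_herm d k"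
proof -
  have "is_sop d k (asym_sop a b)" using assms unfolding is_sop_def asym_sop_def unit_sop_def by auto
  moreover have "hermitian_fn (asym_sop a b)" unfolding hermitian_fn_def asym_sop_def unit_sop_def
    by (intro allI, cases "a = b") (simp_all split: if_split)
  moreover have "(\<Sum>x<d k. asym_sop a b x x) = 0"
    unfolding asym_sop_def unit_sop_def by (simp add: sum_subtractf conj_commute)
  ultimately show ?thesis unfolding traceless_herm_def by simp
qed

definition block :: "(nat \<Rightarrow> nat) \<Rightarrow> nat \<Rightarrow> op \<Rightarrow> nat \<Rightarrow> nat \<Rightarrow> op" where
  "block d k Y a b = (\<lambda>i j. if i \<in> idx d k \<and> j \<in> idx d k then Y (i(k:=a)) (j(k:=b)) else 0)"

text \<open>For hermitian Y the blocks satisfy Y_ba = Y_ab^*, so the real and imaginary parts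
  (Y_ab + Y_ba)/4 and (Y_ab - Y_ba)/(4i) are hermitian.\<close>
lemma block_herm_parts:
  assumes "hermitian_fn Y"
  shows "(\<lambda>i j. (block d k Y a b i j + block d k Y b a i j) / 4) \<in> herm_ops d k"
    and "(\<lambda>i j. (block d k Y a b i j - block d k Y b a i j) / (4 * \<i>)) \<in> herm_ops d k"
proof -
  have Yh: "Y j i = cnj (Y i j)" for i j using assms unfolding hermitian_fn_def by blast
  have bh: "block d k Y a b j i = cnj (block d k Y b a i j)" for a b i j
    unfolding block_def using Yh[of "i(k:=b)" "j(k:=a)"] by (simp add: conj_commute)
  have bop: "is_op d k (block d k Y a b)" for a b unfolding block_def is_op_def by auto
  show "(\<lambda>i j. (block d k Y a b i j + block d k Y b a i j) / 4) \<in> herm_ops d k"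
    unfolding herm_ops_def hermitian_fn_def
  proof (intro CollectI conjI allI)
    show "is_op d k (\<lambda>i j. (block d k Y a b i j + block d k Y b a i j) / 4)"
      using bop unfolding is_op_def by auto
    fix i j
    show "(block d k Y a b j i + block d k Y b a j i) / 4 = cnj ((block d k Y a b i j + block d k Y b a i j) / 4)"
      by (simp add: bh[of a b i j] bh[of b a i j] add.commute)
  qed
  show "(\<lambda>i j. (block d k Y a b i j - block d k Y b a i j) / (4 * \<i>)) \<in> herm_ops d k"
    unfolding herm_ops_def hermitian_fn_def
  proof (intro CollectI conjI allI)
    show "is_op d k (\<lambda>i j. (block d k Y a b i j - block d k Y b a i j) / (4 * \<i>))"
      using bop unfolding is_op_def by auto
    fix i j
    show "(block d k Y a b j i - block d k Y b a j i) / (4 * \<i>)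
        = cnj ((block d k Y a b i j - block d k Y b a i j) / (4 * \<i>))"
      by (simp add: bh[of a b i j] bh[of b a i j] field_simps)
  qed
qed

text \<open>The scalar identity behind the decomposition: summing the (p,q)-entries of the
  generators over all block positions (a,b) recovers the entry v, provided the diagonal
  correction terms y a sum to zero (vanishing partial trace).\<close>
lemma delta_double_sum:
  fixes v :: complex and y :: "nat \<Rightarrow> complex"
  assumes "p < D" "q < D" "(\<Sum>a<D. y a) = 0"
  shows "(\<Sum>a<D. \<Sum>b<D. (if a = p \<and> b = q then v / 2 else 0) + (if a = q \<and> b = p then v / 2 else 0)
           - (if a = b \<and> p = q then y a / of_nat D else 0)) = v"
proof -
  have single: "(\<Sum>a<D. \<Sum>b<D. if a = p' \<and> b = q' then w else 0) = w"
    if "p' < D" "q' < D" for p' q' and w :: complex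
  proof -
    have "(\<Sum>b<D. if a = p' \<and> b = q' then w else 0) = (if a = p' then w else 0)" for a
      using that(2) by (cases "a = p'") simp_all
    then show ?thesis using that(1) by simp
  qed
  have diag: "(\<Sum>a<D. \<Sum>b<D. if a = b \<and> p = q then y a / of_nat D else 0) = 0"
  proof -
    have "(\<Sum>b<D. if a = b \<and> p = q then y a / of_nat D else 0) = (if p = q then y a / of_nat D else 0)"
      if "a < D" for a using that by (cases "p = q") simp_all
    then show ?thesis using assms(3) by (cases "p = q") (simp_all add: sum_divide_distrib[symmetric])
  qed
  show ?thesis
    by (simp only: sum.distrib sum_subtractf single[OF assms(1,2)] single[OF assms(2,1)] diag) simp
qed


text \<open>Let k = 2M+1. A hermitian operator Y on H_k (x) ... (x) H_0 with Tr_k Y = 0 lies in the real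
  span of E (x) F with E traceless hermitian on H_k and F hermitian on H_(k-1) (x) ... (x) H_0:
  with Y_ab the blocks of Y and G_ab = S_ab (x) (Y_ab + Y_ba)/4 + A_ab (x) (Y_ab - Y_ba)/(4i),
  the sum of all G_ab is Y, the diagonal corrections adding up to -(1/d_k) I (x) Tr_k Y = 0.\<close>
lemma traceless_in_top_span:
  fixes M :: nat and Y :: op
  defines "k \<equiv> Suc (2*M)"
  assumes dpos: "0 < d k" and Yop: "is_op d (Suc k) Y" and Yh: "hermitian_fn Y"
    and Ytr: "ptrace d k Y = (\<lambda>i j. 0)"
  shows "Y \<in> rspan {gen_op d (Suc M) (Suc M) E F | E F. E \<in> traceless_herm d k \<and> F \<in> herm_ops d k}"
    (is "_ \<in> rspan ?S")
proof -
  define D where "D = d k"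
  define H1 :: "nat \<Rightarrow> nat \<Rightarrow> op" where
    "H1 a b = (\<lambda>i j. (block d k Y a b i j + block d k Y b a i j) / 4)" for a b
  define H2 :: "nat \<Rightarrow> nat \<Rightarrow> op" where
    "H2 a b = (\<lambda>i j. (block d k Y a b i j - block d k Y b a i j) / (4 * \<i>))" for a b
  define G :: "nat \<Rightarrow> nat \<Rightarrow> op" where
    "G a b = (\<lambda>i j. gen_op d (Suc M) (Suc M) (sym_sop D a b) (H1 a b) i j
                   + gen_op d (Suc M) (Suc M) (asym_sop a b) (H2 a b) i j)" for a b
  have D0: "0 < D" using dpos D_def by simp
  have kk: "Suc (Suc (2*M)) = Suc k" "Suc (2*M) = k" "2 * Suc M = Suc k" by (simp_all add: k_def)
  have G_in: "G a b \<in> rspan ?S" if "a < D" "b < D" for a b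
    unfolding G_def H1_def H2_def D_def
    using sym_sop_traceless[of a d k b] asym_sop_traceless[of a d k b] block_herm_parts[OF Yh, of d k a b]
      that D_def
    by (intro rspan_add rspan_gen) blast+
  have entry: "Y i j = (\<Sum>a<D. \<Sum>b<D. G a b i j)" for i j
  proof (cases "i \<in> idx d (Suc k) \<and> j \<in> idx d (Suc k)")
    case False
    then have "G a b i j = 0" for a b
      unfolding G_def using is_op_gen[of d "Suc M"] unfolding is_op_def kk by auto
    then show ?thesis using False Yop unfolding is_op_def by auto
  next
    case True
    define p where "p = i k"
    define q where "q = j k"
    have pq: "p < D" "q < D" using True unfolding p_def q_def D_def idx_def by auto
    have i0: "i(k:=0) \<in> idx d k" "j(k:=0) \<in> idx d k" using True idx_upd0 by blast+
    have Yij: "Y i j = Y (i(k:=p)) (j(k:=q))" unfolding p_def q_def by simp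
    have blk: "block d k Y a b (i(k:=0)) (j(k:=0)) = Y (i(k:=a)) (j(k:=b))" for a b
      unfolding block_def using i0 by simp
    have Gv: "G a b i j = (if a = p \<and> b = q then Y i j / 2 else 0) + (if a = q \<and> b = p then Y i j / 2 else 0)
       - (if a = b \<and> p = q then Y (i(k:=a)) (j(k:=a)) / of_nat D else 0)" for a b
    proof -
      have "G a b i j = sym_sop D a b p q * ((Y (i(k:=a)) (j(k:=b)) + Y (i(k:=b)) (j(k:=a))) / 4)
          + asym_sop a b p q * ((Y (i(k:=a)) (j(k:=b)) - Y (i(k:=b)) (j(k:=a))) / (4 * \<i>))"
        unfolding G_def H1_def H2_def using True gen_op_top[of i d M j] unfolding kk
        by (simp add: blk p_def q_def)
      also have "\<dots> = (if a = p \<and> b = q then Y i j / 2 else 0) + (if a = q \<and> b = p then Y i j / 2 else 0)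
       - (if a = b \<and> p = q then Y (i(k:=a)) (j(k:=a)) / of_nat D else 0)"
        unfolding sym_sop_def asym_sop_def unit_sop_def Yij using pq D0
        by (cases "a = p"; cases "b = q"; cases "a = q"; cases "b = p"; cases "a = b";
            simp add: field_simps)
      finally show ?thesis .
    qed
    have tr: "(\<Sum>a<D. Y (i(k:=a)) (j(k:=a))) = 0"
      using fun_cong[OF fun_cong[OF Ytr, of "i(k:=0)"], of "j(k:=0)"] i0
      unfolding ptrace_def D_def by simp
    show ?thesis
      unfolding Gv by (rule delta_double_sum[OF pq tr, symmetric])
  qed
  have "Y = (\<lambda>i j. \<Sum>a<D. (\<lambda>i j. \<Sum>b<D. G a b i j) i j)"
    using entry by (intro ext) simp
  also have "\<dots> \<in> rspan ?S"
    by (intro rspan_sum ballI) (auto intro: G_in)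
  finally show ?thesis .
qed


section \<open>Splitting the span of D_(M+1)\<close>

lemma DN_zero: "DN d 0 Eb Fb = {}"
  unfolding DN_def by auto

lemma rspan_DN_is_op:
  assumes "X \<in> rspan (DN d N Eb Fb)"
  shows "is_op d (2*N) X"
  using assms
proof (rule rspan_induct)
  show "is_op d (2 * N) (\<lambda>i j. 0)" by (rule is_op_zero)
  fix x y r assume "x \<in> DN d N Eb Fb" "is_op d (2 * N) y"
  then show "is_op d (2 * N) (\<lambda>i j. complex_of_real r * x i j + y i j)"
    unfolding DN_def using is_op_gen is_op_lin by blast
qed

lemma top_layer_in_DN:
  assumes Eb: "rbasis (Eb (Suc (2*M))) (traceless_herm d (Suc (2*M)))"
    and Fb: "rbasis (Fb (2*M)) (herm_ops d (Suc (2*M)))"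
    and Y: "Y \<in> rspan {gen_op d (Suc M) (Suc M) E F | E F.
                         E \<in> traceless_herm d (Suc (2*M)) \<and> F \<in> herm_ops d (Suc (2*M))}"
  shows "Y \<in> rspan (DN d (Suc M) Eb Fb)"
proof (rule rspan_subset_rspan[OF _ Y], safe)
  fix E F assume "E \<in> traceless_herm d (Suc (2*M))" "F \<in> herm_ops d (Suc (2*M))"
  then have "E \<in> rspan (Eb (Suc (2*M)))" "F \<in> rspan (Fb (2*M))" using Eb Fb unfolding rbasis_def by auto
  then have "gen_op d (Suc M) (Suc M) E F
      \<in> rspan {gen_op d (Suc M) (Suc M) E' F' | E' F'. E' \<in> Eb (Suc (2*M)) \<and> F' \<in> Fb (2*M)}"
    by (rule gen_op_span)
  moreover have "{gen_op d (Suc M) (Suc M) E' F' | E' F'. E' \<in> Eb (Suc (2*M)) \<and> F' \<in> Fb (2*M)}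
      \<subseteq> rspan (DN d (Suc M) Eb Fb)"
    unfolding DN_def by (force intro: rspan_gen)
  ultimately show "gen_op d (Suc M) (Suc M) E F \<in> rspan (DN d (Suc M) Eb Fb)"
    by (rule rspan_subset_rspan[rotated])
qed

lemma lift_in_DN:
  assumes "X \<in> rspan (DN d M Eb Fb)"
  shows "tensorI d (Suc (2*M)) (tensorI d (2*M) X) \<in> rspan (DN d (Suc M) Eb Fb)"
  using assms
proof (rule rspan_induct)
  show "tensorI d (Suc (2*M)) (tensorI d (2*M) (\<lambda>i j. 0)) \<in> rspan (DN d (Suc M) Eb Fb)"
    by (simp add: tensorI_zero rspan_zero)
  fix x y r assume x: "x \<in> DN d M Eb Fb"
    and y: "tensorI d (Suc (2*M)) (tensorI d (2*M) y) \<in> rspan (DN d (Suc M) Eb Fb)"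
  from x obtain n E F where x': "x = gen_op d M n E F" "1 \<le> n" "n \<le> M" "E \<in> Eb (2*n-1)" "F \<in> Fb (2*n-2)"
    unfolding DN_def by blast
  have xx: "tensorI d (Suc (2*M)) (tensorI d (2*M) x) \<in> DN d (Suc M) Eb Fb"
    unfolding x'(1) gen_op_lift[OF x'(2,3)] unfolding DN_def using x' by force
  show "tensorI d (Suc (2*M)) (tensorI d (2*M) (\<lambda>i j. complex_of_real r * x i j + y i j))
      \<in> rspan (DN d (Suc M) Eb Fb)"
    unfolding tensorI_lin by (rule rspan_add[OF rspan_scale[OF rspan_gen[OF xx]] y])
qed

text \<open>Every X in span D_(M+1) is a sum Xt + I (x) I (x) X' with Tr_(2M+1) Xt = 0 and X' in
  span D_(M): the top-layer generators are traceless, the others are lifted from D_(M).\<close>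
lemma DN_split:
  assumes Eb: "rbasis (Eb (Suc (2*M))) (traceless_herm d (Suc (2*M)))"
    and X: "X \<in> rspan (DN d (Suc M) Eb Fb)"
  shows "\<exists>Xt X'. X = (\<lambda>i j. Xt i j + tensorI d (Suc (2*M)) (tensorI d (2*M) X') i j)
      \<and> ptrace d (Suc (2*M)) Xt = (\<lambda>i j. 0) \<and> X' \<in> rspan (DN d M Eb Fb)"
  using X
proof (rule rspan_induct)
  show "\<exists>Xt X'. (\<lambda>i j. 0) = (\<lambda>i j. Xt i j + tensorI d (Suc (2*M)) (tensorI d (2*M) X') i j)
      \<and> ptrace d (Suc (2*M)) Xt = (\<lambda>i j. 0) \<and> X' \<in> rspan (DN d M Eb Fb)"
    by (rule exI[of _ "\<lambda>i j. 0"], rule exI[of _ "\<lambda>i j. 0"]) (simp add: tensorI_zero ptrace_zero rspan_zero)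
next
  fix x y r assume x: "x \<in> DN d (Suc M) Eb Fb"
    and "\<exists>Xt X'. y = (\<lambda>i j. Xt i j + tensorI d (Suc (2*M)) (tensorI d (2*M) X') i j)
      \<and> ptrace d (Suc (2*M)) Xt = (\<lambda>i j. 0) \<and> X' \<in> rspan (DN d M Eb Fb)"
  then obtain Xt X' where y: "y = (\<lambda>i j. Xt i j + tensorI d (Suc (2*M)) (tensorI d (2*M) X') i j)"
      "ptrace d (Suc (2*M)) Xt = (\<lambda>i j. 0)" "X' \<in> rspan (DN d M Eb Fb)" by blast
  from x obtain n E F where x': "x = gen_op d (Suc M) n E F" "1 \<le> n" "n \<le> Suc M"
      "E \<in> Eb (2*n-1)" "F \<in> Fb (2*n-2)"
    unfolding DN_def by blast
  show "\<exists>Xt X'. (\<lambda>i j. complex_of_real r * x i j + y i j)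
      = (\<lambda>i j. Xt i j + tensorI d (Suc (2*M)) (tensorI d (2*M) X') i j)
      \<and> ptrace d (Suc (2*M)) Xt = (\<lambda>i j. 0) \<and> X' \<in> rspan (DN d M Eb Fb)"
  proof (cases "n = Suc M")
    case True
    then have "E \<in> traceless_herm d (Suc (2*M))" using x'(4) Eb unfolding rbasis_def by auto
    then have tr: "ptrace d (Suc (2*M)) x = (\<lambda>i j. 0)"
      unfolding x'(1) True traceless_herm_def by (intro ptrace_gen_top) auto
    show ?thesis
      apply (rule exI[of _ "\<lambda>i j. complex_of_real r * x i j + Xt i j"], rule exI[of _ X'])
      using y tr by (simp add: ptrace_lin add.assoc)
  next
    case False
    then have nM: "n \<le> M" using x'(3) by simp
    have g: "gen_op d M n E F \<in> DN d M Eb Fb" unfolding DN_def using x' nM by blast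
    have mem: "(\<lambda>i j. complex_of_real r * gen_op d M n E F i j + X' i j) \<in> rspan (DN d M Eb Fb)"
      by (rule rspan_add[OF rspan_scale[OF rspan_gen[OF g]] y(3)])
    show ?thesis
      apply (rule exI[of _ Xt], rule exI[of _ "\<lambda>i j. complex_of_real r * gen_op d M n E F i j + X' i j"])
      using y mem unfolding x'(1) gen_op_lift[OF x'(2) nM, symmetric]
      by (simp add: tensorI_lin add.left_commute)
  qed
qed

section \<open>The normal form c I + span D_(N) and the one-tooth step\<close>

definition comb_form :: "(nat \<Rightarrow> nat) \<Rightarrow> nat \<Rightarrow> (nat \<Rightarrow> sop set) \<Rightarrow> (nat \<Rightarrow> op set) \<Rightarrow> real \<Rightarrow> op \<Rightarrow> bool" where
  "comb_form d N Eb Fb c R \<longleftrightarrow>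
     (\<exists>X\<in>rspan (DN d N Eb Fb). R = (\<lambda>i j. complex_of_real c * Id_op d (2*N) i j + X i j))"

lemma comb_form_is_op: "comb_form d N Eb Fb c R \<Longrightarrow> is_op d (2*N) R"
  unfolding comb_form_def using rspan_DN_is_op is_op_Id is_op_lin by blast

lemma ptrace_comb_form:
  assumes Eb: "rbasis (Eb (Suc (2*M))) (traceless_herm d (Suc (2*M)))"
    and R: "comb_form d (Suc M) Eb Fb c R"
  shows "\<exists>Q. comb_form d M Eb Fb (c * real (d (Suc (2*M)))) Q \<and> ptrace d (Suc (2*M)) R = tensorI d (2*M) Q"
proof -
  define k where "k = Suc (2*M)"
  define K where "K = 2*M"
  have kK: "k = Suc K" "2 * Suc M = Suc k" unfolding k_def K_def by simp_all
  obtain X where X: "X \<in> rspan (DN d (Suc M) Eb Fb)" "R = (\<lambda>i j. complex_of_real c * Id_op d (Suc k) i j + X i j)"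
    using R unfolding comb_form_def kK(2) by blast
  obtain Xt X' where sp: "X = (\<lambda>i j. Xt i j + tensorI d k (tensorI d K X') i j)"
      "ptrace d k Xt = (\<lambda>i j. 0)" "X' \<in> rspan (DN d M Eb Fb)"
    using DN_split[OF Eb X(1)] unfolding k_def K_def by blast
  have TTop: "is_op d k (tensorI d K X')" unfolding kK by (rule is_op_tensorI)
  have IdK: "Id_op d (Suc k) = tensorI d k (tensorI d K (Id_op d K))"
    unfolding tensorI_Id kK ..
  have "ptrace d k R = (\<lambda>i j. complex_of_real c * (of_nat (d k) * tensorI d K (Id_op d K) i j)
        + (0 + of_nat (d k) * tensorI d K X' i j))"
    unfolding X(2) sp(1) IdK ptrace_lin ptrace_add sp(2)
      ptrace_tensorI[OF TTop] ptrace_tensorI[OF is_op_tensorI[of d K, unfolded kK[symmetric]]] ..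
  also have "\<dots> = tensorI d K (\<lambda>i j. complex_of_real (c * real (d k)) * Id_op d K i j
      + complex_of_real (real (d k)) * X' i j)"
    unfolding tensorI_lin tensorI_scale by (intro ext) (simp add: algebra_simps)
  finally have "ptrace d k R = tensorI d K (\<lambda>i j. complex_of_real (c * real (d k)) * Id_op d K i j
      + complex_of_real (real (d k)) * X' i j)" .
  moreover have "comb_form d M Eb Fb (c * real (d k))
      (\<lambda>i j. complex_of_real (c * real (d k)) * Id_op d K i j + complex_of_real (real (d k)) * X' i j)"
    unfolding comb_form_def K_def by (rule bexI[OF _ rspan_scale[OF sp(3), of "real (d k)"]]) simp
  ultimately show ?thesis unfolding k_def K_def by blast
qed

text \<open>The traceless part
  R - (1/d_(2M+1)) I (x) Tr_(2M+1) R is in the top layer, the rest is lifted from Q.\<close>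
lemma comb_form_from_ptrace:
  assumes dk: "0 < d (Suc (2*M))"
    and Eb: "rbasis (Eb (Suc (2*M))) (traceless_herm d (Suc (2*M)))"
    and Fb: "rbasis (Fb (2*M)) (herm_ops d (Suc (2*M)))"
    and Rop: "is_op d (2 * Suc M) R" and Rh: "hermitian_fn R"
    and PQ: "ptrace d (Suc (2*M)) R = tensorI d (2*M) Q"
    and Q: "comb_form d M Eb Fb c Q"
  shows "comb_form d (Suc M) Eb Fb (c / real (d (Suc (2*M)))) R"
proof -
  define k where "k = Suc (2*M)"
  define K where "K = 2*M"
  have kK: "k = Suc K" "2 * Suc M = Suc k" unfolding k_def K_def by simp_all
  define P where "P = ptrace d k R"
  define Y where "Y = (\<lambda>i j. complex_of_real (- 1 / real (d k)) * tensorI d k P i j + R i j)"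
  have Pop: "is_op d k P" unfolding P_def by (rule is_op_ptrace)
  have "ptrace d k Y = (\<lambda>i j. complex_of_real (- 1 / real (d k)) * (of_nat (d k) * P i j) + P i j)"
    unfolding Y_def ptrace_lin ptrace_tensorI[OF Pop] P_def[symmetric] by simp
  also have "\<dots> = (\<lambda>i j. 0)" using dk unfolding k_def by (intro ext) (simp add: field_simps)
  finally have Ytr: "ptrace d k Y = (\<lambda>i j. 0)" .
  have Yh: "hermitian_fn Y" unfolding Y_def P_def
    by (intro herm_lin herm_tensorI herm_ptrace Rh)
  have Yop: "is_op d (Suc k) Y" unfolding Y_def using is_op_tensorI Rop kK by (intro is_op_lin) auto
  have Yin: "Y \<in> rspan (DN d (Suc M) Eb Fb)"
    using top_layer_in_DN[where M=M and d=d and Eb=Eb and Fb=Fb, OF Eb Fb] traceless_in_top_span[of d M Y]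
      dk Yop Yh Ytr unfolding k_def by blast
  obtain X' where X': "X' \<in> rspan (DN d M Eb Fb)" "Q = (\<lambda>i j. complex_of_real c * Id_op d K i j + X' i j)"
    using Q unfolding comb_form_def K_def by blast
  have TTQ: "tensorI d k P = (\<lambda>i j. complex_of_real c * Id_op d (Suc k) i j
       + tensorI d k (tensorI d K X') i j)"
    unfolding P_def k_def PQ[folded K_def] X'(2) tensorI_lin tensorI_Id kK(1)[unfolded k_def] ..
  have Req: "R = (\<lambda>i j. complex_of_real (c / real (d k)) * Id_op d (2 * Suc M) i j
     + (Y i j + complex_of_real (1 / real (d k)) * tensorI d k (tensorI d K X') i j))"
    unfolding Y_def TTQ kK(2) by (intro ext) (simp add: algebra_simps)
  have Xin: "(\<lambda>i j. Y i j + complex_of_real (1 / real (d k)) * tensorI d k (tensorI d K X') i j)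
      \<in> rspan (DN d (Suc M) Eb Fb)"
    using lift_in_DN[OF X'(1)] unfolding k_def K_def by (intro rspan_add[OF Yin] rspan_scale)
  show ?thesis unfolding comb_form_def k_def[symmetric] by (rule bexI[OF _ Xin]) (use Req in simp)
qed


section \<open>Normalization conditions, tooth by tooth\<close>

text \<open>The normalization conditions extended to N = 0: on the trivial space
  H_(-1) (x) ... (x) H_0 = C the normalized operator is the identity. This lets the
  recursion below start uniformly at zero teeth.\<close>
definition normalized :: "(nat \<Rightarrow> nat) \<Rightarrow> nat \<Rightarrow> op \<Rightarrow> bool" where
  "normalized d M Q \<longleftrightarrow> (if M = 0 then Q = Id_op d 0 else comb_norm d M Q)"

lemma normalized_is_op: "normalized d M Q \<Longrightarrow> is_op d (2*M) Q"
  unfolding normalized_def comb_norm_def using is_op_Id by (cases "M = 0") auto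

lemma comb_norm_Suc:
  "comb_norm d (Suc M) R \<longleftrightarrow> is_op d (2 * Suc M) R \<and>
     (\<exists>Q. normalized d M Q \<and> ptrace d (Suc (2*M)) R = tensorI d (2*M) Q)"
proof
  assume "comb_norm d (Suc M) R"
  then obtain Rs where Rs: "Rs (Suc M) = R" "\<forall>n. 1 \<le> n \<and> n \<le> Suc M \<longrightarrow> is_op d (2*n) (Rs n)"
      "\<forall>n. 2 \<le> n \<and> n \<le> Suc M \<longrightarrow> ptrace d (2*n-1) (Rs n) = tensorI d (2*n-2) (Rs (n-1))"
      "ptrace d 1 (Rs 1) = Id_op d 1"
    unfolding comb_norm_def by blast
  have "normalized d M (Rs M) \<and> ptrace d (Suc (2*M)) R = tensorI d (2*M) (Rs M)" if "M \<noteq> 0"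
  proof
    have "comb_norm d M (Rs M)" unfolding comb_norm_def using Rs by (intro exI[of _ Rs]) auto
    then show "normalized d M (Rs M)" using that by (simp add: normalized_def)
    show "ptrace d (Suc (2*M)) R = tensorI d (2*M) (Rs M)"
      using Rs(1) Rs(3)[rule_format, of "Suc M"] that by simp
  qed
  moreover have "normalized d 0 (Id_op d 0) \<and> ptrace d 1 R = tensorI d 0 (Id_op d 0)" if "M = 0"
    using Rs(1,4) that tensorI_Id[of d 0] by (simp add: normalized_def)
  ultimately show "is_op d (2 * Suc M) R \<and>
      (\<exists>Q. normalized d M Q \<and> ptrace d (Suc (2*M)) R = tensorI d (2*M) Q)"
    using Rs(1,2) by (cases "M = 0") auto
next
  assume "is_op d (2 * Suc M) R \<and> (\<exists>Q. normalized d M Q \<and> ptrace d (Suc (2*M)) R = tensorI d (2*M) Q)"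
  then obtain Q where Rop: "is_op d (2 * Suc M) R" and Q: "normalized d M Q"
    and PQ: "ptrace d (Suc (2*M)) R = tensorI d (2*M) Q" by blast
  show "comb_norm d (Suc M) R"
  proof (cases "M = 0")
    case True
    then have "ptrace d 1 R = Id_op d 1" using Q PQ tensorI_Id[of d 0] by (simp add: normalized_def)
    then show ?thesis unfolding comb_norm_def using Rop True
      by (intro exI[of _ "\<lambda>_. R"]) (auto simp: le_Suc_eq)
  next
    case False
    then obtain Rs where Rs: "Rs M = Q" "\<forall>n. 1 \<le> n \<and> n \<le> M \<longrightarrow> is_op d (2*n) (Rs n)"
        "\<forall>n. 2 \<le> n \<and> n \<le> M \<longrightarrow> ptrace d (2*n-1) (Rs n) = tensorI d (2*n-2) (Rs (n-1))"
        "ptrace d 1 (Rs 1) = Id_op d 1"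
      using Q unfolding normalized_def comb_norm_def by auto
    show ?thesis unfolding comb_norm_def
    proof (intro exI[of _ "Rs(Suc M := R)"] conjI allI impI)
      show "(Rs(Suc M := R)) (Suc M) = R" by simp
      show "ptrace d 1 ((Rs(Suc M := R)) 1) = Id_op d 1" using Rs(4) False by simp
      fix n
      show "is_op d (2 * n) ((Rs(Suc M := R)) n)" if "1 \<le> n \<and> n \<le> Suc M"
        using that Rs(2) Rop by (cases "n = Suc M") auto
      show "ptrace d (2 * n - 1) ((Rs(Suc M := R)) n) = tensorI d (2 * n - 2) ((Rs(Suc M := R)) (n - 1))"
        if "2 \<le> n \<and> n \<le> Suc M"
        using that Rs(1,3) PQ by (cases "n = Suc M") auto
    qed
  qed
qed

definition comb_const :: "(nat \<Rightarrow> nat) \<Rightarrow> nat \<Rightarrow> real" where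
  "comb_const d N = 1 / (\<Prod>n\<in>{1..N}. real (d (2*n-1)))"

lemma comb_const_Suc: "comb_const d (Suc M) = comb_const d M / real (d (Suc (2*M)))"
  unfolding comb_const_def by (simp add: atLeastAtMostSuc_conv)

lemma normalized_iff_comb_form:
  assumes "\<forall>k<2*M. 0 < d k" "\<forall>k<2*M. rbasis (Eb k) (traceless_herm d k)"
    "\<forall>k<2*M. even k \<longrightarrow> rbasis (Fb k) (herm_ops d (Suc k))"
    "is_op d (2*M) Q" "hermitian_fn Q"
  shows "normalized d M Q \<longleftrightarrow> comb_form d M Eb Fb (comb_const d M) Q"
  using assms
proof (induction M arbitrary: Q)
  case 0
  have "comb_form d 0 Eb Fb 1 Q \<longleftrightarrow> Q = Id_op d 0"
  proof
    assume "comb_form d 0 Eb Fb 1 Q"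
    then show "Q = Id_op d 0" unfolding comb_form_def DN_zero by (auto dest: rspan_empty)
  next
    assume "Q = Id_op d 0"
    then show "comb_form d 0 Eb Fb 1 Q" unfolding comb_form_def by (intro bexI[OF _ rspan_zero]) simp
  qed
  then show ?case by (simp add: normalized_def comb_const_def)
next
  case (Suc M R)
  define k where "k = Suc (2*M)"
  define K where "K = 2*M"
  have dk: "0 < d k" and dK: "0 < d K" using Suc.prems(1) unfolding k_def K_def by auto
  have Eb: "rbasis (Eb k) (traceless_herm d k)" using Suc.prems(2) unfolding k_def by auto
  have Fb: "rbasis (Fb K) (herm_ops d k)" using Suc.prems(3) unfolding k_def K_def by auto
  \<comment> \<open>a candidate Q for the trace condition is an operator, and hermitian because R is\<close>
  have Q_iff: "normalized d M Q \<longleftrightarrow> comb_form d M Eb Fb (comb_const d M) Q"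
    if PQ: "ptrace d k R = tensorI d K Q" and "normalized d M Q \<or> comb_form d M Eb Fb (comb_const d M) Q"
    for Q
  proof -
    have Qop: "is_op d (2*M) Q" using that(2) normalized_is_op comb_form_is_op by blast
    have "hermitian_fn Q"
      using herm_from_tensorI[OF Qop[folded K_def] dK] herm_ptrace[OF Suc.prems(5)] PQ by metis
    then show ?thesis using Suc.IH Suc.prems(1-3) Qop by auto
  qed
  have "normalized d (Suc M) R \<longleftrightarrow> (\<exists>Q. normalized d M Q \<and> ptrace d k R = tensorI d K Q)"
    using comb_norm_Suc Suc.prems(4) unfolding normalized_def k_def K_def by simp
  also have "\<dots> \<longleftrightarrow> (\<exists>Q. comb_form d M Eb Fb (comb_const d M) Q \<and> ptrace d k R = tensorI d K Q)"
    using Q_iff by blast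
  also have "\<dots> \<longleftrightarrow> comb_form d (Suc M) Eb Fb (comb_const d (Suc M)) R"
  proof
    assume "\<exists>Q. comb_form d M Eb Fb (comb_const d M) Q \<and> ptrace d k R = tensorI d K Q"
    then show "comb_form d (Suc M) Eb Fb (comb_const d (Suc M)) R"
      using comb_form_from_ptrace[where d=d and M=M and Eb=Eb and Fb=Fb and R=R,
          OF dk[unfolded k_def] Eb[unfolded k_def] Fb[unfolded k_def K_def] Suc.prems(4,5)]
      unfolding comb_const_Suc k_def K_def by blast
  next
    assume "comb_form d (Suc M) Eb Fb (comb_const d (Suc M)) R"
    moreover have "comb_const d (Suc M) * real (d k) = comb_const d M"
      using dk unfolding comb_const_Suc k_def by simp
    ultimately show "\<exists>Q. comb_form d M Eb Fb (comb_const d M) Q \<and> ptrace d k R = tensorI d K Q"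
      using ptrace_comb_form[where d=d and M=M and Eb=Eb and Fb=Fb, OF Eb[unfolded k_def]]
      unfolding k_def K_def by metis
  qed
  finally show ?case .
qed

theorem mainTheorem3:
  fixes d :: "nat \<Rightarrow> nat" and N :: nat and R :: op
    and Eb :: "nat \<Rightarrow> sop set" and Fb :: "nat \<Rightarrow> op set"
  assumes "1 \<le> N"
    and "\<forall>k<2*N. 0 < d k"
    and "\<forall>k<2*N. rbasis (Eb k) (traceless_herm d k)"
    and "\<forall>k<2*N. even k \<longrightarrow> rbasis (Fb k) (herm_ops d (Suc k))"
    and "is_op d (2*N) R"
    and "hermitian_fn R"
  shows "(comb_norm d N R \<longleftrightarrow>
            (\<exists>X\<in>rspan (DN d N Eb Fb).
               R = (\<lambda>i j. complex_of_real (1 / (\<Prod>n\<in>{1..N}. real (d (2*n-1)))) * Id_op d (2*N) i j + X i j)))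
       \<and> (det_comb d N R \<longleftrightarrow> positive_op d (2*N) R \<and>
            (\<exists>X\<in>rspan (DN d N Eb Fb).
               R = (\<lambda>i j. complex_of_real (1 / (\<Prod>n\<in>{1..N}. real (d (2*n-1)))) * Id_op d (2*N) i j + X i j)))"
proof -
  have "N \<noteq> 0" using assms(1) by simp
  then have "comb_norm d N R \<longleftrightarrow> comb_form d N Eb Fb (comb_const d N) R"
    using normalized_iff_comb_form[OF assms(2-6)] unfolding normalized_def by simp
  then show ?thesis unfolding det_comb_def comb_form_def comb_const_def by blast
qed

end
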